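(* Let $(G,c)$ be a W-state graph, and let $X$ and $X'$ be the vertex sets of the two connected components of the spanning subgraph $G_m=(V(G),E_m(G))$ of monochromatic edges. Then the set of bichromatic edges $E_b(G)$ equals the cut $\delta(X,X')$, the set of edges with one endpoint in $X$ and the other in $X'$.
   Context: Graphs may have parallel edges but no loops. A half-edge $2$-colouring $c$ of $G$ assigns to each pair $(e,w)$ with $w$ an endpoint of edge $e$ a colour in $\{0,1\}$ (0 = blue, 1 = red). An edge $e=uv$ is bichromatic if $c(e,u)\neq c(e,v)$ and monochromatic otherwise; $E_m(G)$, $E_b(G)$ denote the monochromatic and bichromatic edge sets; standing convention: monochromatic edges are blue at both ends. A graph is matching-covered if every edge lies in some perfect matching. A W-state graph is a half-edge $2$-coloured matching-covered graph $(G,c)$ in which every perfect matching contains exactly one bichromatic edge, and every vertex $v$ is incident with an edge $e$ with $c(e,v)=1$. For any W-state graph, $G_m$ has exactly two connected components, each factor-critical (a graph $F$ is factor-critical if $F-u$ has a perfect matching for every vertex $u$). *)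

theory Defs
  imports Main
begin

text \<open>A finite multigraph without loops: vertex set V, edge set E, and an
endpoint map ends; every edge has exactly two distinct endpoints in V.
Parallel edges are distinct elements of E with equal ends.\<close>
definition multigraph :: "'v set \<Rightarrow> 'e set \<Rightarrow> ('e \<Rightarrow> 'v set) \<Rightarrow> bool" where
  "multigraph V E ends \<longleftrightarrow> finite V \<and> finite E \<and>
     (\<forall>e\<in>E. ends e \<subseteq> V \<and> card (ends e) = 2)"

text \<open>Half-edge colouring c e w, with w an endpoint of e: False = 0 = blue, True = 1 = red.\<close>
definition bichromatic :: "('e \<Rightarrow> 'v set) \<Rightarrow> ('e \<Rightarrow> 'v \<Rightarrow> bool) \<Rightarrow> 'e \<Rightarrow> bool" where
  "bichromatic ends c e \<longleftrightarrow> (\<exists>u\<in>ends e. \<exists>v\<in>ends e. c e u \<noteq> c e v)"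

definition E_b :: "'e set \<Rightarrow> ('e \<Rightarrow> 'v set) \<Rightarrow> ('e \<Rightarrow> 'v \<Rightarrow> bool) \<Rightarrow> 'e set" where
  "E_b E ends c = {e\<in>E. bichromatic ends c e}"

definition E_m :: "'e set \<Rightarrow> ('e \<Rightarrow> 'v set) \<Rightarrow> ('e \<Rightarrow> 'v \<Rightarrow> bool) \<Rightarrow> 'e set" where
  "E_m E ends c = {e\<in>E. \<not> bichromatic ends c e}"

definition perfect_matching :: "'v set \<Rightarrow> 'e set \<Rightarrow> ('e \<Rightarrow> 'v set) \<Rightarrow> 'e set \<Rightarrow> bool" where
  "perfect_matching V E ends M \<longleftrightarrow> M \<subseteq> E \<and> (\<forall>v\<in>V. \<exists>!e. e \<in> M \<and> v \<in> ends e)"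

definition matching_covered :: "'v set \<Rightarrow> 'e set \<Rightarrow> ('e \<Rightarrow> 'v set) \<Rightarrow> bool" where
  "matching_covered V E ends \<longleftrightarrow>
     (\<forall>e\<in>E. \<exists>M. perfect_matching V E ends M \<and> e \<in> M)"

text \<open>W-state graph, including the standing convention that monochromatic edges
are blue at both ends.\<close>
definition W_state_graph :: "'v set \<Rightarrow> 'e set \<Rightarrow> ('e \<Rightarrow> 'v set) \<Rightarrow> ('e \<Rightarrow> 'v \<Rightarrow> bool) \<Rightarrow> bool" where
  "W_state_graph V E ends c \<longleftrightarrow>
     multigraph V E ends \<and> matching_covered V E ends \<and>
     (\<forall>e\<in>E_m E ends c. \<forall>w\<in>ends e. c e w = False) \<and>
     (\<forall>M. perfect_matching V E ends M \<longrightarrow> card (M \<inter> E_b E ends c) = 1) \<and>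
     (\<forall>v\<in>V. \<exists>e\<in>E. v \<in> ends e \<and> c e v = True)"

definition adj_in :: "'e set \<Rightarrow> ('e \<Rightarrow> 'v set) \<Rightarrow> ('v \<times> 'v) set" where
  "adj_in F ends = {(u, v). \<exists>e\<in>F. ends e = {u, v}}"

definition component_of :: "'v set \<Rightarrow> 'e set \<Rightarrow> ('e \<Rightarrow> 'v set) \<Rightarrow> 'v \<Rightarrow> 'v set" where
  "component_of V F ends v = {u. (v, u) \<in> (adj_in F ends)\<^sup>*}"

definition components :: "'v set \<Rightarrow> 'e set \<Rightarrow> ('e \<Rightarrow> 'v set) \<Rightarrow> 'v set set" where
  "components V F ends = component_of V F ends ` V"

definition cut :: "'e set \<Rightarrow> ('e \<Rightarrow> 'v set) \<Rightarrow> 'v set \<Rightarrow> 'v set \<Rightarrow> 'e set" where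
  "cut E ends X Y = {e\<in>E. \<exists>x\<in>X. \<exists>y\<in>Y. ends e = {x, y}}"

end

theory Submission
  imports Defs
begin

text \<open>Let \<open>S, T\<close> partition the vertices so that no monochromatic edge crosses between
them. If \<open>M\<close> is a perfect matching with bichromatic edge \<open>e\<close>, all other edges of \<open>M\<close>
lie on one side, so \<open>|T|\<close> has the parity of the number of ends of \<open>e\<close> in \<open>T\<close>.
Suppose a bichromatic edge \<open>e\<close> lies inside \<open>S\<close>. Then \<open>|T|\<close> is even, which rules out
bichromatic edges crossing the partition; so no edge crosses at all. A red half-edge at a
vertex of \<open>T\<close> gives a bichromatic edge \<open>f\<close> inside \<open>T\<close>, and gluing the \<open>S\<close>-part of a
perfect matching through \<open>e\<close> to the \<open>T\<close>-part of one through \<open>f\<close> yields a perfect matching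
with two bichromatic edges. Applied to the two monochromatic components, this shows that
every bichromatic edge joins them; conversely, a monochromatic edge never does.\<close>

definition no_edge_crosses :: "'e set \<Rightarrow> ('e \<Rightarrow> 'v set) \<Rightarrow> 'v set \<Rightarrow> bool" where
  "no_edge_crosses F ends S \<longleftrightarrow> (\<forall>g\<in>F. ends g \<subseteq> S \<or> ends g \<inter> S = {})"

lemma no_edge_crosses_subset:
  "no_edge_crosses F ends S \<Longrightarrow> F' \<subseteq> F \<Longrightarrow> no_edge_crosses F' ends S"
  unfolding no_edge_crosses_def by blast

lemma multigraph_edgeE:
  assumes "multigraph V E ends" "e \<in> E"
  obtains p q where "ends e = {p, q}" "p \<in> V" "q \<in> V"
proof -
  have "ends e \<subseteq> V" "card (ends e) = 2"
    using assms unfolding multigraph_def by auto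
  then show ?thesis
    using that by (auto simp: card_2_iff)
qed

lemma perfect_matching_unique_edge:
  assumes "perfect_matching V E ends M" "v \<in> V" "g \<in> M" "h \<in> M" "v \<in> ends g" "v \<in> ends h"
  shows "g = h"
  using assms unfolding perfect_matching_def by blast

lemma perfect_matching_edge_at:
  "perfect_matching V E ends M \<Longrightarrow> v \<in> V \<Longrightarrow> \<exists>g\<in>M. v \<in> ends g"
  unfolding perfect_matching_def by (meson ex1_implies_ex)

lemma perfect_matching_finite:
  "multigraph V E ends \<Longrightarrow> perfect_matching V E ends M \<Longrightarrow> finite M"
  unfolding perfect_matching_def multigraph_def by (auto intro: finite_subset)

lemma perfect_matching_card_eq_sum:
  assumes mg: "multigraph V E ends" and M: "perfect_matching V E ends M" and TV: "T \<subseteq> V"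
  shows "card T = (\<Sum>g\<in>M. card (ends g \<inter> T))"
proof -
  have "finite T"
    using TV mg finite_subset unfolding multigraph_def by auto
  have "T = (\<Union>g\<in>M. ends g \<inter> T)"
    using perfect_matching_edge_at[OF M] TV by blast
  then have "card T = card (\<Union>g\<in>M. ends g \<inter> T)"
    by (rule arg_cong)
  also have "\<dots> = (\<Sum>g\<in>M. card (ends g \<inter> T))"
  proof (rule card_UN_disjoint)
    show "finite M"
      using perfect_matching_finite[OF mg M] .
    show "\<forall>g\<in>M. finite (ends g \<inter> T)"
      using \<open>finite T\<close> by simp
    show "\<forall>g\<in>M. \<forall>h\<in>M. g \<noteq> h \<longrightarrow> (ends g \<inter> T) \<inter> (ends h \<inter> T) = {}"
      using perfect_matching_unique_edge[OF M] TV by blast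
  qed
  finally show ?thesis .
qed

lemma perfect_matching_card_parity:
  assumes mg: "multigraph V E ends" and M: "perfect_matching V E ends M" and "e \<in> M"
    and TV: "T \<subseteq> V" and nc: "no_edge_crosses (M - {e}) ends T"
  shows "even (card T) \<longleftrightarrow> even (card (ends e \<inter> T))"
proof -
  have "finite M"
    using perfect_matching_finite[OF mg M] .
  then have "card T = card (ends e \<inter> T) + (\<Sum>g\<in>M - {e}. card (ends g \<inter> T))"
    using perfect_matching_card_eq_sum[OF mg M TV] \<open>e \<in> M\<close> by (simp add: sum.remove)
  moreover have "even (\<Sum>g\<in>M - {e}. card (ends g \<inter> T))"
  proof (rule dvd_sum)
    fix g assume g: "g \<in> M - {e}"
    then have "g \<in> E"
      using M unfolding perfect_matching_def by blast
    then have "card (ends g) = 2"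
      using mg unfolding multigraph_def by blast
    moreover have "ends g \<inter> T = ends g \<or> ends g \<inter> T = {}"
      using nc g unfolding no_edge_crosses_def by blast
    ultimately show "even (card (ends g \<inter> T))"
      by auto
  qed
  ultimately show ?thesis
    by simp
qed

lemma perfect_matching_glue:
  assumes M: "perfect_matching V E ends M" and M': "perfect_matching V E ends M'"
    and ST: "S \<inter> T = {}" "S \<union> T = V"
    and sides: "\<forall>g\<in>M \<union> M'. ends g \<subseteq> S \<or> ends g \<subseteq> T"
  shows "perfect_matching V E ends ({g\<in>M. ends g \<subseteq> S} \<union> {g\<in>M'. ends g \<subseteq> T})"
    (is "perfect_matching V E ends ?N")
  unfolding perfect_matching_def
proof (intro conjI ballI)
  show "?N \<subseteq> E"
    using M M' unfolding perfect_matching_def by blast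
next
  fix v assume v: "v \<in> V"
  show "\<exists>!g. g \<in> ?N \<and> v \<in> ends g"
  proof (cases "v \<in> S")
    case True
    then have "v \<notin> T"
      using ST by blast
    obtain g where g: "g \<in> M" "v \<in> ends g"
      using perfect_matching_edge_at[OF M v] by blast
    show ?thesis
    proof (rule ex1I[of _ g])
      show "g \<in> ?N \<and> v \<in> ends g"
        using g sides \<open>v \<notin> T\<close> by blast
      show "h = g" if "h \<in> ?N \<and> v \<in> ends h" for h
        using that g \<open>v \<notin> T\<close> perfect_matching_unique_edge[OF M v] by blast
    qed
  next
    case False
    then have "v \<in> T"
      using ST v by blast
    obtain g where g: "g \<in> M'" "v \<in> ends g"
      using perfect_matching_edge_at[OF M' v] by blast
    show ?thesis
    proof (rule ex1I[of _ g])
      show "g \<in> ?N \<and> v \<in> ends g"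
        using g sides \<open>v \<notin> S\<close> by blast
      show "h = g" if "h \<in> ?N \<and> v \<in> ends h" for h
        using that g \<open>v \<notin> S\<close> perfect_matching_unique_edge[OF M' v] by blast
    qed
  qed
qed

lemma sym_adj_in: "sym (adj_in F ends)"
  unfolding sym_def adj_in_def by (auto simp: insert_commute)

lemma component_of_subset:
  assumes FV: "\<forall>g\<in>F. ends g \<subseteq> V" and "v \<in> V"
  shows "component_of V F ends v \<subseteq> V"
proof
  fix u assume "u \<in> component_of V F ends v"
  then have "(v, u) \<in> (adj_in F ends)\<^sup>*"
    unfolding component_of_def by simp
  then show "u \<in> V"
  proof induction
    case base
    show ?case using \<open>v \<in> V\<close> .
  next
    case (step y z)
    then obtain g where "g \<in> F" "ends g = {y, z}"
      unfolding adj_in_def by blast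
    then show ?case
      using FV by blast
  qed
qed

lemma component_of_eq_if_not_disjoint:
  assumes "component_of V F ends u \<inter> component_of V F ends v \<noteq> {}"
  shows "component_of V F ends u = component_of V F ends v"
proof -
  let ?R = "(adj_in F ends)\<^sup>*"
  have symR: "(x, y) \<in> ?R \<Longrightarrow> (y, x) \<in> ?R" for x y
    by (rule symD[OF sym_rtrancl[OF sym_adj_in]])
  obtain x where ux: "(u, x) \<in> ?R" and vx: "(v, x) \<in> ?R"
    using assms unfolding component_of_def by blast
  have uv: "(u, v) \<in> ?R" and vu: "(v, u) \<in> ?R"
    using rtrancl_trans[OF ux symR[OF vx]] rtrancl_trans[OF vx symR[OF ux]] .
  have "(u, w) \<in> ?R \<longleftrightarrow> (v, w) \<in> ?R" for w
    using rtrancl_trans[OF uv, of w] rtrancl_trans[OF vu, of w] by blast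
  then show ?thesis
    unfolding component_of_def by blast
qed

lemma no_edge_crosses_components:
  assumes "\<forall>g\<in>F. card (ends g) = 2" and "X \<in> components V F ends"
  shows "no_edge_crosses F ends X"
proof -
  obtain z where z: "X = component_of V F ends z"
    using assms(2) unfolding components_def by blast
  show ?thesis
    unfolding no_edge_crosses_def z
  proof
    fix g assume g: "g \<in> F"
    then obtain p q where pq: "ends g = {p, q}"
      using assms(1) card_2_iff by metis
    then have "(p, q) \<in> adj_in F ends" "(q, p) \<in> adj_in F ends"
      using g unfolding adj_in_def by (auto simp: insert_commute)
    then have "(z, p) \<in> (adj_in F ends)\<^sup>* \<longleftrightarrow> (z, q) \<in> (adj_in F ends)\<^sup>*"
      by (meson rtrancl.rtrancl_into_rtrancl)
    then show "ends g \<subseteq> component_of V F ends z \<or> ends g \<inter> component_of V F ends z = {}"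
      using pq unfolding component_of_def by auto
  qed
qed

lemma two_components_partition:
  assumes FV: "\<forall>g\<in>F. ends g \<subseteq> V"
    and comps: "components V F ends = {X, X'}" and "X \<noteq> X'"
  shows "X \<inter> X' = {}" "X \<union> X' = V" "X \<noteq> {}" "X' \<noteq> {}"
proof -
  have self: "v \<in> component_of V F ends v" for v
    unfolding component_of_def by simp
  have "X \<in> component_of V F ends ` V" "X' \<in> component_of V F ends ` V"
    using comps unfolding components_def by simp_all
  then obtain a b where a: "X = component_of V F ends a" "a \<in> V"
    and b: "X' = component_of V F ends b" "b \<in> V"
    by (meson imageE)
  show "X \<inter> X' = {}"
  proof (rule ccontr)
    assume "X \<inter> X' \<noteq> {}"
    then have "X = X'"
      unfolding a(1) b(1) by (rule component_of_eq_if_not_disjoint)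
    with \<open>X \<noteq> X'\<close> show False ..
  qed
  have "V \<subseteq> X \<union> X'"
  proof
    fix v assume "v \<in> V"
    then have "component_of V F ends v \<in> components V F ends"
      unfolding components_def by (rule imageI)
    then show "v \<in> X \<union> X'"
      using comps self[of v] by auto
  qed
  then show "X \<union> X' = V"
    using component_of_subset[OF FV a(2)] component_of_subset[OF FV b(2)] a(1) b(1) by auto
  show "X \<noteq> {}" "X' \<noteq> {}"
    using self[of a] self[of b] a(1) b(1) by auto
qed

lemma W_state_graphD:
  assumes "W_state_graph V E ends c"
  shows "multigraph V E ends" "matching_covered V E ends"
    and "\<And>e w. e \<in> E_m E ends c \<Longrightarrow> w \<in> ends e \<Longrightarrow> \<not> c e w"
    and "\<And>M. perfect_matching V E ends M \<Longrightarrow> card (M \<inter> E_b E ends c) = 1"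
    and "\<And>v. v \<in> V \<Longrightarrow> \<exists>e\<in>E. v \<in> ends e \<and> c e v"
  using assms unfolding W_state_graph_def by blast+

lemma E_b_iff: "e \<in> E_b E ends c \<longleftrightarrow> e \<in> E \<and> e \<notin> E_m E ends c"
  unfolding E_b_def E_m_def by auto

lemma W_state_bichromatic_unique:
  assumes W: "W_state_graph V E ends c" and M: "perfect_matching V E ends M"
    and e: "e \<in> M" "e \<in> E_b E ends c"
  shows "M - {e} \<subseteq> E_m E ends c"
proof
  fix g assume g: "g \<in> M - {e}"
  obtain x where x: "M \<inter> E_b E ends c = {x}"
    using card_1_singletonE[OF W_state_graphD(4)[OF W M]] .
  moreover have "e \<in> M \<inter> E_b E ends c"
    using e by simp
  ultimately have "M \<inter> E_b E ends c = {e}"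
    by simp
  then have "g \<notin> E_b E ends c"
    using g by blast
  moreover have "g \<in> E"
    using g M unfolding perfect_matching_def by blast
  ultimately show "g \<in> E_m E ends c"
    unfolding E_b_iff by simp
qed

lemma W_state_card_parity:
  assumes W: "W_state_graph V E ends c" and TV: "T \<subseteq> V"
    and nc: "no_edge_crosses (E_m E ends c) ends T" and e: "e \<in> E_b E ends c"
  shows "even (card T) \<longleftrightarrow> even (card (ends e \<inter> T))"
proof -
  have "e \<in> E"
    using e unfolding E_b_iff by simp
  then obtain M where M: "perfect_matching V E ends M" "e \<in> M"
    using W_state_graphD(2)[OF W] unfolding matching_covered_def by blast
  have "no_edge_crosses (M - {e}) ends T"
    using no_edge_crosses_subset[OF nc W_state_bichromatic_unique[OF W M e]] .
  then show ?thesis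
    by (rule perfect_matching_card_parity[OF W_state_graphD(1)[OF W] M TV])
qed

lemma W_state_red_end_bichromatic:
  assumes W: "W_state_graph V E ends c" and "f \<in> E" "w \<in> ends f" "c f w"
  shows "f \<in> E_b E ends c"
  using W_state_graphD(3)[OF W _ \<open>w \<in> ends f\<close>] assms(2,4) unfolding E_b_iff by blast

lemma W_state_no_crossing_edge:
  assumes W: "W_state_graph V E ends c"
    and ST: "S \<inter> T = {}" "S \<union> T = V" and nc: "no_edge_crosses (E_m E ends c) ends T"
    and e: "e \<in> E_b E ends c" "ends e \<subseteq> S" and f: "f \<in> E"
  shows "ends f \<subseteq> S \<or> ends f \<subseteq> T"
proof (rule ccontr)
  assume crossing: "\<not> (ends f \<subseteq> S \<or> ends f \<subseteq> T)"
  have TV: "T \<subseteq> V"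
    using ST by blast
  have "ends e \<inter> T = {}"
    using e(2) ST(1) by blast
  then have "even (card T)"
    using W_state_card_parity[OF W TV nc e(1)] by simp
  obtain p q where pq: "ends f = {p, q}" "p \<in> V" "q \<in> V"
    using multigraph_edgeE[OF W_state_graphD(1)[OF W] f] by metis
  then have one_end_in_T: "ends f \<inter> T = {p} \<or> ends f \<inter> T = {q}"
    using crossing ST by auto
  then have "f \<notin> E_m E ends c"
    using nc crossing unfolding no_edge_crosses_def by auto
  then have "f \<in> E_b E ends c"
    using f unfolding E_b_iff by simp
  then have "odd (card T)"
    using W_state_card_parity[OF W TV nc] one_end_in_T by auto
  with \<open>even (card T)\<close> show False
    by simp
qed

lemma W_state_no_bichromatic_inside:
  assumes W: "W_state_graph V E ends c"
    and ST: "S \<inter> T = {}" "S \<union> T = V" "T \<noteq> {}"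
    and nc: "no_edge_crosses (E_m E ends c) ends T"
    and e: "e \<in> E_b E ends c" "ends e \<subseteq> S"
  shows False
proof -
  obtain w where "w \<in> T"
    using ST(3) by blast
  then obtain f where f: "f \<in> E" "w \<in> ends f" "c f w"
    using W_state_graphD(5)[OF W] ST(2) by blast
  have sides: "\<forall>g\<in>E. ends g \<subseteq> S \<or> ends g \<subseteq> T"
    using W_state_no_crossing_edge[OF W ST(1,2) nc e] by blast
  then have fT: "ends f \<subseteq> T"
    using f(1,2) \<open>w \<in> T\<close> ST(1) by blast
  have "e \<in> E"
    using e(1) unfolding E_b_iff by simp
  then obtain M where M: "perfect_matching V E ends M" "e \<in> M"
    using W_state_graphD(2)[OF W] unfolding matching_covered_def by blast
  obtain M' where M': "perfect_matching V E ends M'" "f \<in> M'"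
    using W_state_graphD(2)[OF W] f(1) unfolding matching_covered_def by blast
  define N where "N = {g\<in>M. ends g \<subseteq> S} \<union> {g\<in>M'. ends g \<subseteq> T}"
  have "M \<union> M' \<subseteq> E"
    using M M' unfolding perfect_matching_def by blast
  then have N: "perfect_matching V E ends N"
    unfolding N_def using perfect_matching_glue[OF M(1) M'(1) ST(1,2)] sides by blast
  have "e \<noteq> f"
    using e(2) f(2) fT \<open>w \<in> T\<close> ST(1) by blast
  have "{e, f} \<subseteq> N \<inter> E_b E ends c"
    using M(2) M'(2) e fT W_state_red_end_bichromatic[OF W f] unfolding N_def by blast
  then have "card {e, f} \<le> card (N \<inter> E_b E ends c)"
    using perfect_matching_finite[OF W_state_graphD(1)[OF W] N] by (simp add: card_mono)
  with \<open>e \<noteq> f\<close> show False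
    using W_state_graphD(4)[OF W N] by simp
qed

lemma in_cutI:
  assumes "e \<in> E" "ends e = {p, q}" "p \<in> X \<union> Y" "q \<in> X \<union> Y"
    and "\<not> ends e \<subseteq> X" "\<not> ends e \<subseteq> Y"
  shows "e \<in> cut E ends X Y"
proof -
  have "(p \<in> X \<and> q \<in> Y) \<or> (q \<in> X \<and> p \<in> Y)"
    using assms(2-6) by auto
  then show ?thesis
    using assms(1,2) unfolding cut_def by (auto simp: insert_commute)
qed

lemma W_state_E_b_eq_cut:
  assumes W: "W_state_graph V E ends c"
    and ST: "S \<inter> T = {}" "S \<union> T = V" "S \<noteq> {}" "T \<noteq> {}"
    and ncS: "no_edge_crosses (E_m E ends c) ends S"
    and ncT: "no_edge_crosses (E_m E ends c) ends T"
  shows "E_b E ends c = cut E ends S T"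
proof (intro set_eqI iffI)
  fix e assume e: "e \<in> E_b E ends c"
  then have "e \<in> E"
    unfolding E_b_iff by simp
  then obtain p q where pq: "ends e = {p, q}" "p \<in> S \<union> T" "q \<in> S \<union> T"
    using multigraph_edgeE[OF W_state_graphD(1)[OF W]] ST(2) by metis
  have "\<not> ends e \<subseteq> S"
    using W_state_no_bichromatic_inside[OF W ST(1,2,4) ncT e] by blast
  moreover have "\<not> ends e \<subseteq> T"
    using W_state_no_bichromatic_inside[OF W _ _ ST(3) ncS e] ST(1,2) by blast
  ultimately show "e \<in> cut E ends S T"
    by (rule in_cutI[where ends = ends, OF \<open>e \<in> E\<close> pq])
next
  fix e assume "e \<in> cut E ends S T"
  then show "e \<in> E_b E ends c"
    using ncS ST(1) unfolding cut_def no_edge_crosses_def E_b_iff by blast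
qed

theorem mainTheorem9:
  fixes V :: "'v set" and E :: "'e set" and ends :: "'e \<Rightarrow> 'v set"
    and c :: "'e \<Rightarrow> 'v \<Rightarrow> bool" and X X' :: "'v set"
  assumes "W_state_graph V E ends c"
    and "components V (E_m E ends c) ends = {X, X'}"
    and "X \<noteq> X'"
  shows "E_b E ends c = cut E ends X X'"
proof -
  have "multigraph V E ends"
    using W_state_graphD(1)[OF assms(1)] .
  then have Em: "\<forall>g\<in>E_m E ends c. ends g \<subseteq> V" "\<forall>g\<in>E_m E ends c. card (ends g) = 2"
    unfolding multigraph_def E_m_def by auto
  have "no_edge_crosses (E_m E ends c) ends X" "no_edge_crosses (E_m E ends c) ends X'"
    using no_edge_crosses_components[OF Em(2), where V = V] assms(2) by simp_all
  then show ?thesis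
    by (rule W_state_E_b_eq_cut[OF assms(1) two_components_partition[OF Em(1) assms(2,3)]])
qed

end
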